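(* If a homomorphism distinguishing closed class $\mathcal{F}$ of simple graphs is closed under deleting edges, then it is closed under taking subgraphs.
   Context: All graphs are finite, undirected, without multiple edges; simple means without loops. $\hom(F,G)$ is the number of homomorphisms $F\to G$; $G\equiv_{\mathcal{F}}H$ means $\hom(F,G)=\hom(F,H)$ for all $F\in\mathcal{F}$; $\mathrm{cl}(\mathcal{F})$ is the class of all simple graphs $K$ such that for all simple $G,H$, $G\equiv_{\mathcal{F}}H$ implies $\hom(K,G)=\hom(K,H)$; $\mathcal{F}$ is homomorphism distinguishing closed if $\mathrm{cl}(\mathcal{F})=\mathcal{F}$. Deleting edges yields a graph with the same vertex set and a subset of the edges; subgraphs may also delete vertices. *)

theory Defs
  imports "HOL-Library.FuncSet"
begin

text \<open>Graphs on vertices from nat: a vertex set and a set of ordered pairs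
(an undirected edge {u,v} is represented by both (u,v) and (v,u)).\<close>
type_synonym graph = "nat set \<times> (nat \<times> nat) set"

definition verts :: "graph \<Rightarrow> nat set" where "verts G = fst G"
definition edges :: "graph \<Rightarrow> (nat \<times> nat) set" where "edges G = snd G"

definition simple_graph :: "graph \<Rightarrow> bool" where
  "simple_graph G \<longleftrightarrow> finite (verts G) \<and> edges G \<subseteq> verts G \<times> verts G
     \<and> sym (edges G) \<and> irrefl (edges G)"

definition homs :: "graph \<Rightarrow> graph \<Rightarrow> (nat \<Rightarrow> nat) set" where
  "homs F G = {h \<in> verts F \<rightarrow>\<^sub>E verts G. \<forall>(u,v) \<in> edges F. (h u, h v) \<in> edges G}"

definition hom_count :: "graph \<Rightarrow> graph \<Rightarrow> nat" where
  "hom_count F G = card (homs F G)"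

definition hom_equiv :: "graph set \<Rightarrow> graph \<Rightarrow> graph \<Rightarrow> bool" where
  "hom_equiv \<F> G H \<longleftrightarrow> (\<forall>F \<in> \<F>. hom_count F G = hom_count F H)"

definition hd_cl :: "graph set \<Rightarrow> graph set" where
  "hd_cl \<F> = {K. simple_graph K \<and> (\<forall>G H. simple_graph G \<longrightarrow> simple_graph H \<longrightarrow>
       hom_equiv \<F> G H \<longrightarrow> hom_count K G = hom_count K H)}"

definition hd_closed :: "graph set \<Rightarrow> bool" where
  "hd_closed \<F> \<longleftrightarrow> hd_cl \<F> = \<F>"

definition edge_deletion_of :: "graph \<Rightarrow> graph \<Rightarrow> bool" where
  "edge_deletion_of K G \<longleftrightarrow> verts K = verts G \<and> edges K \<subseteq> edges G"

definition subgraph_of :: "graph \<Rightarrow> graph \<Rightarrow> bool" where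
  "subgraph_of K G \<longleftrightarrow> verts K \<subseteq> verts G \<and> edges K \<subseteq> edges G"

definition closed_under_edge_deletion :: "graph set \<Rightarrow> bool" where
  "closed_under_edge_deletion \<F> \<longleftrightarrow>
     (\<forall>G \<in> \<F>. \<forall>K. simple_graph K \<and> edge_deletion_of K G \<longrightarrow> K \<in> \<F>)"

definition closed_under_subgraphs :: "graph set \<Rightarrow> bool" where
  "closed_under_subgraphs \<F> \<longleftrightarrow>
     (\<forall>G \<in> \<F>. \<forall>K. simple_graph K \<and> subgraph_of K G \<longrightarrow> K \<in> \<F>)"

end

theory Submission
  imports Defs
begin

text \<open>Let \<open>K\<close> be a subgraph of \<open>G \<in> \<F>\<close>. Adding the missing vertices of \<open>G\<close> to \<open>K\<close> as isolated
vertices gives an edge-deleted graph of \<open>G\<close>, and so does the edgeless graph on the vertices of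
\<open>G\<close>; both lie in \<open>\<F>\<close>. Since isolated vertices multiply homomorphism counts into \<open>X\<close> by
\<open>|V(X)|\<close>, \<open>\<F>\<close>-equivalent graphs have the same number of vertices and, after cancelling,
the same number of homomorphisms from \<open>K\<close>. Hence \<open>K \<in> cl(\<F>) = \<F>\<close>.\<close>

definition add_isolated :: "graph \<Rightarrow> nat set \<Rightarrow> graph" where
  "add_isolated K S = (verts K \<union> S, edges K)"

definition edgeless :: "nat set \<Rightarrow> graph" where
  "edgeless V = (V, {})"

lemma verts_Pair [simp]: "verts (V, E) = V"
  and edges_Pair [simp]: "edges (V, E) = E"
  by (simp_all add: verts_def edges_def)

lemma homs_add_isolated_bij:
  assumes "edges K \<subseteq> verts K \<times> verts K" and "verts K \<inter> S = {}"
  shows "bij_betw (\<lambda>h. (restrict h (verts K), restrict h S))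
           (homs (add_isolated K S) X) (homs K X \<times> (S \<rightarrow>\<^sub>E verts X))"
proof (rule bij_betw_byWitness[where f' = "\<lambda>(f, g) x. if x \<in> verts K then f x else g x"])
  show "\<forall>h \<in> homs (add_isolated K S) X.
      (\<lambda>(f, g) x. if x \<in> verts K then f x else g x) (restrict h (verts K), restrict h S) = h"
    by (auto simp: homs_def add_isolated_def PiE_def extensional_def fun_eq_iff)
  show "\<forall>fg \<in> homs K X \<times> (S \<rightarrow>\<^sub>E verts X).
      (restrict ((\<lambda>(f, g) x. if x \<in> verts K then f x else g x) fg) (verts K),
       restrict ((\<lambda>(f, g) x. if x \<in> verts K then f x else g x) fg) S) = fg"
    using assms(2) by (auto simp: homs_def PiE_def extensional_def fun_eq_iff)
  show "(\<lambda>h. (restrict h (verts K), restrict h S)) ` homs (add_isolated K S) X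
      \<subseteq> homs K X \<times> (S \<rightarrow>\<^sub>E verts X)"
    using assms(1) by (fastforce simp: homs_def add_isolated_def PiE_def extensional_def)
  show "(\<lambda>(f, g) x. if x \<in> verts K then f x else g x) ` (homs K X \<times> (S \<rightarrow>\<^sub>E verts X))
      \<subseteq> homs (add_isolated K S) X"
    using assms by (fastforce simp: homs_def add_isolated_def PiE_def extensional_def)
qed

lemma hom_count_add_isolated:
  assumes "edges K \<subseteq> verts K \<times> verts K" and "verts K \<inter> S = {}" and "finite S"
  shows "hom_count (add_isolated K S) X = hom_count K X * card (verts X) ^ card S"
proof -
  have "hom_count (add_isolated K S) X = card (homs K X \<times> (S \<rightarrow>\<^sub>E verts X))"
    unfolding hom_count_def using bij_betw_same_card[OF homs_add_isolated_bij[OF assms(1,2)]] .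
  then show ?thesis
    using assms(3) by (simp add: card_cartesian_product card_PiE hom_count_def)
qed

lemma hom_count_edgeless:
  assumes "finite V"
  shows "hom_count (edgeless V) X = card (verts X) ^ card V"
proof -
  have "homs (edgeless V) X = V \<rightarrow>\<^sub>E verts X"
    by (simp add: homs_def edgeless_def)
  then show ?thesis
    using assms by (simp add: hom_count_def card_PiE)
qed

lemma simple_graph_without_verts:
  assumes "simple_graph G" and "verts G = {}"
  shows "G = edgeless {}"
  using assms by (simp add: simple_graph_def edgeless_def prod_eq_iff verts_def edges_def)

lemma hom_equiv_card_verts_eq:
  assumes "edgeless V \<in> \<F>" and "finite V" and "V \<noteq> {}" and "hom_equiv \<F> G H"
  shows "card (verts G) = card (verts H)"
proof -
  have "card (verts G) ^ card V = card (verts H) ^ card V"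
    using assms(1,4) hom_count_edgeless[OF assms(2)] unfolding hom_equiv_def by metis
  moreover have "card V > 0"
    using assms(2,3) by (simp add: card_gt_0_iff)
  ultimately show ?thesis
    by (metis power_inject_base zero_le gr0_implies_Suc)
qed

lemma in_hd_cl_if_padding_in:
  assumes "simple_graph K" and "finite S" and "verts K \<inter> S = {}"
    and "add_isolated K S \<in> \<F>" and "edgeless (verts K \<union> S) \<in> \<F>"
  shows "K \<in> hd_cl \<F>"
  unfolding hd_cl_def
proof (intro CollectI conjI assms(1) allI impI)
  fix G H assume G: "simple_graph G" and H: "simple_graph H" and equiv: "hom_equiv \<F> G H"
  have edges_K: "edges K \<subseteq> verts K \<times> verts K"
    using assms(1) by (simp add: simple_graph_def)
  have padded: "hom_count K G * card (verts G) ^ card S = hom_count K H * card (verts H) ^ card S"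
    using equiv assms(4) hom_count_add_isolated[OF edges_K assms(3,2)]
    unfolding hom_equiv_def by metis
  show "hom_count K G = hom_count K H"
  proof (cases "S = {}")
    case True
    then show ?thesis using padded by simp
  next
    case False
    have fin: "finite (verts K \<union> S)"
      using assms(1,2) by (simp add: simple_graph_def)
    have same_card: "card (verts G) = card (verts H)"
      using hom_equiv_card_verts_eq[OF assms(5) fin _ equiv] False by blast
    show ?thesis
    proof (cases "card (verts G) = 0")
      case True
      with same_card G H have "verts G = {}" and "verts H = {}"
        by (simp_all add: simple_graph_def)
      with G H have "G = H"
        by (metis simple_graph_without_verts)
      then show ?thesis by simp
    next
      case False
      then show ?thesis using padded same_card by simp
    qed
  qed
qed

theorem lemma12:
  fixes \<F> :: "graph set"
  assumes "\<forall>G \<in> \<F>. simple_graph G"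
    and "hd_closed \<F>"
    and "closed_under_edge_deletion \<F>"
  shows "closed_under_subgraphs \<F>"
  unfolding closed_under_subgraphs_def
proof (intro ballI allI impI, elim conjE)
  fix G K assume "G \<in> \<F>" and K: "simple_graph K" and "subgraph_of K G"
  have G: "simple_graph G" using assms(1) \<open>G \<in> \<F>\<close> by blast
  define S where "S = verts G - verts K"
  have verts_G: "verts K \<union> S = verts G"
    using \<open>subgraph_of K G\<close> by (auto simp: S_def subgraph_of_def)
  have padded: "add_isolated K S \<in> \<F>" and edgeless: "edgeless (verts K \<union> S) \<in> \<F>"
    using assms(3) \<open>G \<in> \<F>\<close> \<open>subgraph_of K G\<close> K G verts_G
    unfolding closed_under_edge_deletion_def
    by (auto simp: add_isolated_def edgeless_def edge_deletion_of_def subgraph_of_def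
        simple_graph_def sym_def irrefl_def)
  have "finite S" and "verts K \<inter> S = {}"
    using G by (auto simp: S_def simple_graph_def)
  then have "K \<in> hd_cl \<F>"
    by (rule in_hd_cl_if_padding_in[OF K _ _ padded edgeless])
  then show "K \<in> \<F>"
    using assms(2) by (simp add: hd_closed_def)
qed

end
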